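(* Let $\mathcal{T}$ be a microdata table with $d \ge 1$ quasi-identifier attributes and let $l$ be a positive integer. For any $\lambda \ge 1$, every $\lambda$-approximate solution to Tuple Minimization on $(\mathcal{T}, l)$ is a $(\lambda \cdot d)$-approximate solution to Star Minimization on $(\mathcal{T}, l)$.
   Context: A microdata table $\mathcal{T}$ is a multiset of $n$ tuples over $d$ categorical quasi-identifier (QI) attributes $A_1,\dots,A_d$ and one categorical sensitive attribute (SA) $B$. For an integer $l \ge 1$, a set $S$ of tuples is $l$-eligible if at most $|S|/l$ of its tuples share any identical SA value. A partition $P$ of $\mathcal{T}$ into disjoint subsets (QI-groups) defines a generalization $\mathcal{T}^*$: for each QI-group and each $i$, if all tuples of the group have the same value on $A_i$ they keep it, otherwise all their $A_i$ values are replaced by a star `*'; SA values are kept unchanged. $\mathcal{T}^*$ is $l$-diverse if every QI-group is $l$-eligible. A tuple is suppressed if at least one of its QI values is replaced by a star. Star Minimization: find an $l$-diverse generalization of $\mathcal{T}$ with the minimum number of stars. Tuple Minimization: find an $l$-diverse generalization of $\mathcal{T}$ with the minimum number of suppressed tuples. A $\lambda$-approximate solution to either problem is an $l$-diverse generalization whose objective value (number of stars, resp. number of suppressed tuples) is at most $\lambda$ times the optimal value. *)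

theory Defs
  imports Complex_Main "HOL-Library.Disjoint_Sets"
begin

(* A microdata table: a finite set T of tuple identifiers (so that the multiset of
   tuples may contain identical tuples), QI values qi t i for attributes i < d,
   and SA value sa t. *)

definition l_eligible :: "('t \<Rightarrow> 's) \<Rightarrow> nat \<Rightarrow> 't set \<Rightarrow> bool" where
  "l_eligible sa l S \<longleftrightarrow> (\<forall>s. real (card {t \<in> S. sa t = s}) \<le> real (card S) / real l)"

definition starred :: "('t \<Rightarrow> nat \<Rightarrow> 'a) \<Rightarrow> 't set \<Rightarrow> nat \<Rightarrow> bool" where
  "starred qi G i \<longleftrightarrow> (\<exists>x\<in>G. \<exists>y\<in>G. qi x i \<noteq> qi y i)"

definition l_diverse :: "'t set \<Rightarrow> ('t \<Rightarrow> 's) \<Rightarrow> nat \<Rightarrow> 't set set \<Rightarrow> bool" where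
  "l_diverse T sa l P \<longleftrightarrow> partition_on T P \<and> (\<forall>G\<in>P. l_eligible sa l G)"

definition num_stars :: "nat \<Rightarrow> ('t \<Rightarrow> nat \<Rightarrow> 'a) \<Rightarrow> 't set set \<Rightarrow> nat" where
  "num_stars d qi P = (\<Sum>G\<in>P. \<Sum>i<d. if starred qi G i then card G else 0)"

definition num_suppressed :: "nat \<Rightarrow> ('t \<Rightarrow> nat \<Rightarrow> 'a) \<Rightarrow> 't set set \<Rightarrow> nat" where
  "num_suppressed d qi P = (\<Sum>G\<in>P. if (\<exists>i<d. starred qi G i) then card G else 0)"

definition opt_value :: "'t set \<Rightarrow> ('t \<Rightarrow> 's) \<Rightarrow> nat \<Rightarrow> ('t set set \<Rightarrow> nat) \<Rightarrow> nat" where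
  "opt_value T sa l obj = Min (obj ` {P. l_diverse T sa l P})"

definition approx_solution ::
  "real \<Rightarrow> 't set \<Rightarrow> ('t \<Rightarrow> 's) \<Rightarrow> nat \<Rightarrow> ('t set set \<Rightarrow> nat) \<Rightarrow> 't set set \<Rightarrow> bool" where
  "approx_solution lam T sa l obj P \<longleftrightarrow>
     l_diverse T sa l P \<and> real (obj P) \<le> lam * real (opt_value T sa l obj)"

end

theory Submission
  imports Defs
begin

text \<open>A suppressed tuple carries between one and \<open>d\<close> stars, so the two objectives are
  within a factor \<open>d\<close> of each other on every generalization. Hence the Tuple Minimization
  optimum is at most the Star Minimization optimum, and a \<open>\<lambda>\<close>-approximate solution of the
  former has at most \<open>d \<cdot> \<lambda> \<cdot> OPT\<^sub>tuple \<le> d \<cdot> \<lambda> \<cdot> OPT\<^sub>star\<close> stars.\<close>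

lemma if_ex_le_sum_if:
  fixes c :: nat
  assumes "finite I"
  shows "(if \<exists>i\<in>I. p i then c else 0) \<le> (\<Sum>i\<in>I. if p i then c else 0)"
proof (cases "\<exists>i\<in>I. p i")
  case True
  then obtain i where "i \<in> I" "p i" by blast
  with assms show ?thesis
    using member_le_sum[of i I "\<lambda>i. if p i then c else 0"] by simp
qed simp

lemma sum_if_le_card_mult_if_ex:
  fixes c :: nat
  shows "(\<Sum>i\<in>I. if p i then c else 0) \<le> card I * (if \<exists>i\<in>I. p i then c else 0)"
proof (cases "\<exists>i\<in>I. p i")
  case True
  have "(\<Sum>i\<in>I. if p i then c else 0) \<le> (\<Sum>i\<in>I. c)"
    by (rule sum_mono) simp
  with True show ?thesis by simp
qed simp

lemma num_suppressed_le_num_stars: "num_suppressed d qi P \<le> num_stars d qi P"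
  unfolding num_suppressed_def num_stars_def
proof (rule sum_mono)
  fix G
  show "(if \<exists>i<d. starred qi G i then card G else 0) \<le> (\<Sum>i<d. if starred qi G i then card G else 0)"
    using if_ex_le_sum_if[of "{..<d}" "starred qi G" "card G"] by (simp add: lessThan_def)
qed

lemma num_stars_le_num_suppressed: "num_stars d qi P \<le> d * num_suppressed d qi P"
  unfolding num_suppressed_def num_stars_def sum_distrib_left
proof (rule sum_mono)
  fix G
  show "(\<Sum>i<d. if starred qi G i then card G else 0) \<le> d * (if \<exists>i<d. starred qi G i then card G else 0)"
    using sum_if_le_card_mult_if_ex[of "starred qi G" "card G" "{..<d}"] by (simp add: lessThan_def)
qed

lemma finite_l_diverse: "finite T \<Longrightarrow> finite {P. l_diverse T sa l P}"
  by (rule finite_subset[of _ "Pow (Pow T)"]) (auto simp: l_diverse_def partition_on_def)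

lemma opt_value_le:
  "finite T \<Longrightarrow> l_diverse T sa l P \<Longrightarrow> opt_value T sa l obj \<le> obj P"
  unfolding opt_value_def by (rule Min_le) (auto intro: finite_l_diverse)

lemma opt_value_attained:
  assumes "finite T" "l_diverse T sa l P"
  obtains Q where "l_diverse T sa l Q" "opt_value T sa l obj = obj Q"
proof -
  have "opt_value T sa l obj \<in> obj ` {P. l_diverse T sa l P}"
    unfolding opt_value_def using assms by (intro Min_in) (auto intro: finite_l_diverse)
  then show ?thesis using that by blast
qed

lemma opt_value_mono:
  assumes "finite T" "l_diverse T sa l P" "\<And>Q. l_diverse T sa l Q \<Longrightarrow> f Q \<le> g Q"
  shows "opt_value T sa l f \<le> opt_value T sa l g"
proof -
  obtain Q where Q: "l_diverse T sa l Q" "opt_value T sa l g = g Q"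
    using opt_value_attained[OF assms(1,2)] .
  have "opt_value T sa l f \<le> f Q" using assms(1) Q(1) by (rule opt_value_le)
  also have "\<dots> \<le> g Q" using assms(3) Q(1) .
  finally show ?thesis using Q(2) by simp
qed

lemma approx_solution_transfer:
  assumes "finite T" "lam \<ge> 0"
    and le: "\<And>Q. l_diverse T sa l Q \<Longrightarrow> f Q \<le> g Q"
    and ge: "\<And>Q. l_diverse T sa l Q \<Longrightarrow> g Q \<le> c * f Q"
    and P: "approx_solution lam T sa l f P"
  shows "approx_solution (lam * real c) T sa l g P"
proof -
  have div: "l_diverse T sa l P"
    and approx: "real (f P) \<le> lam * real (opt_value T sa l f)"
    using P unfolding approx_solution_def by auto
  have opt: "opt_value T sa l f \<le> opt_value T sa l g"
    using assms(1) div le by (rule opt_value_mono)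
  have "real (g P) \<le> real c * real (f P)"
    using ge[OF div] by (metis of_nat_le_iff of_nat_mult)
  also have "\<dots> \<le> real c * (lam * real (opt_value T sa l f))"
    using approx by (intro mult_left_mono) auto
  also have "\<dots> \<le> real c * (lam * real (opt_value T sa l g))"
    using opt \<open>lam \<ge> 0\<close> by (intro mult_left_mono) auto
  finally show ?thesis using div unfolding approx_solution_def by (simp add: mult_ac)
qed

theorem lemma2:
  fixes T :: "'t set" and qi :: "'t \<Rightarrow> nat \<Rightarrow> 'a" and sa :: "'t \<Rightarrow> 's"
    and d l :: nat and lam :: real and P :: "'t set set"
  assumes "finite T" and "d \<ge> 1" and "l \<ge> 1" and "lam \<ge> 1"
    and "approx_solution lam T sa l (num_suppressed d qi) P"
  shows "approx_solution (lam * real d) T sa l (num_stars d qi) P"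
  using assms(1) _ num_suppressed_le_num_stars num_stars_le_num_suppressed assms(5)
  by (rule approx_solution_transfer) (use assms(4) in simp)

end
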